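(* For all pairwise distinct $j,l,k\in\{1,\dots,M\}$, almost surely $$\big|\mathbb E\{g_{lk}(\boldsymbol X)-g_l(\boldsymbol X)-g_k(\boldsymbol X)\mid\boldsymbol X_{\mathcal X(\{l,j\})}\}\big|\le\frac{8\delta_0\sqrt{\mathbb E[f(\boldsymbol X)^2]}}{p_{\min}}.$$
   Context: Setup. $\boldsymbol X=(X_1,\dots,X_p)^\top$ is a random vector in $\{0,1\}^p$; $\{1,\dots,p\}$ is partitioned into disjoint nonempty feature groups $\mathcal X(1),\dots,\mathcal X(M)$; a group is either a single feature or has $\#\mathcal X(m)>1$ and consists of one-hot indicators ($\sum_{j\in\mathcal X(m)}\mathbf 1\{X_j=1\}=1$ a.s.). $\mathcal X(J)=\bigcup_{m\in J}\mathcal X(m)$; $\boldsymbol X_H=(X_j)_{j\in H}$, $\boldsymbol X_{-H}=(X_j)_{j\notin H}$. Conditional expectations given null events are set to $0$. $p_{\min}=\min_{1\le l<k\le M,\,i\in\mathcal X(l),\,j\in\mathcal X(k),\,(a,b)\in\{0,1\}^2}\mathbb P(X_i=a,X_j=b)>0$; $\delta_0=\max_{1\le m\le M}\inf\{\delta\ge0:\mathbb P(\max_{i\in\mathcal X(m)}|\mathbb P(X_i=1\mid\boldsymbol X_{-\mathcal X(m)})-\mathbb P(X_i=1)|\le\delta)=1\}$. For $f:\{0,1\}^p\to\mathbb R$ and $J\subset\{1,\dots,M\}$, $g_J(\boldsymbol X)=\mathbb E(f(\boldsymbol X)-\mathbb E(f(\boldsymbol X)\mid\boldsymbol X_{-\mathcal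 X(J)})\mid\boldsymbol X_{\mathcal X(J)})$, with $g_m=g_{\{m\}}$ and $g_{lk}=g_{\{l,k\}}$. *)

theory Defs
  imports "HOL-Probability.Probability"
begin

text \<open>Features are indexed by a finite type 'n (p = CARD('n)); a realisation of X is
  a vector x :: 'n \<Rightarrow> bool (True = 1). Groups are indexed by a
  finite type 'm (M = CARD('m)); grp i is the group of feature i, so the groups are
  the fibres of grp, which partition the features.\<close>

definition agree :: "'n set \<Rightarrow> ('n \<Rightarrow> bool) \<Rightarrow> ('n \<Rightarrow> bool) set" where
  "agree H x = {y. \<forall>i\<in>H. y i = x i}"

text \<open>Elementary conditional expectation E(Y(X) | X_H) evaluated at X = x; set to 0 on null events.\<close>
definition cond_exp :: "('n::finite \<Rightarrow> bool) pmf \<Rightarrow> 'n set \<Rightarrow> (('n \<Rightarrow> bool) \<Rightarrow> real)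
    \<Rightarrow> ('n \<Rightarrow> bool) \<Rightarrow> real" where
  "cond_exp mu H Y x =
     (if measure_pmf.prob mu (agree H x) = 0 then 0
      else (\<Sum>y\<in>agree H x. pmf mu y * Y y) / measure_pmf.prob mu (agree H x))"

definition gJ :: "('n::finite \<Rightarrow> bool) pmf \<Rightarrow> ('n \<Rightarrow> 'm) \<Rightarrow> (('n \<Rightarrow> bool) \<Rightarrow> real)
    \<Rightarrow> 'm set \<Rightarrow> ('n \<Rightarrow> bool) \<Rightarrow> real" where
  "gJ mu grp f J =
     cond_exp mu (grp -` J) (\<lambda>y. f y - cond_exp mu (- (grp -` J)) f y)"

definition pmin :: "('n::finite \<Rightarrow> bool) pmf \<Rightarrow> ('n \<Rightarrow> 'm) \<Rightarrow> real" where
  "pmin mu grp = Min {measure_pmf.prob mu {x. x i = a \<and> x j = b} | i j a b.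
                        grp i \<noteq> grp j}"

text \<open>delta_0 = max over groups m of the essential supremum of
  max_{i in X(m)} |P(X_i = 1 | X_{-X(m)}) - P(X_i = 1)|, written as the infimum in the paper.\<close>
definition dev :: "('n::finite \<Rightarrow> bool) pmf \<Rightarrow> ('n \<Rightarrow> 'm) \<Rightarrow> 'm \<Rightarrow> ('n \<Rightarrow> bool) \<Rightarrow> real" where
  "dev mu grp m x = Max ((\<lambda>i. \<bar>cond_exp mu (- (grp -` {m})) (\<lambda>y. if y i then 1 else 0) x
                              - measure_pmf.prob mu {y. y i}\<bar>) ` (grp -` {m}))"

definition delta0 :: "('n::finite \<Rightarrow> bool) pmf \<Rightarrow> ('n \<Rightarrow> 'm::finite) \<Rightarrow> real" where
  "delta0 mu grp = Max ((\<lambda>m. Inf {\<delta>. \<delta> \<ge> 0 \<and>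
        measure_pmf.prob mu {x. dev mu grp m x \<le> \<delta>} = 1}) ` UNIV)"

end

theory Submission
  imports Defs
begin

text \<open>The dependence between a group and the other features is measured by \<open>\<delta>\<^sub>0\<close>: given
  the other groups, the probability of each value of a group moves by at most \<open>\<delta>\<^sub>0\<close> from its
  marginal probability. Two consequences drive the proof. First, for a function \<open>h\<close> of the
  groups \<open>l, k\<close>, integrating out group \<open>k\<close> against its conditional law or against its
  marginal law differs by at most \<open>\<delta>\<^sub>0 E|h| / p\<^sub>m\<^sub>i\<^sub>n\<close>, because every value of the pair of
  groups that can occur has probability at least \<open>p\<^sub>m\<^sub>i\<^sub>n\<close>. Second, a centred function of the
  groups other than \<open>l\<close> has conditional expectation given group \<open>l\<close> of size at most
  \<open>\<delta>\<^sub>0 E|w| / p\<^sub>m\<^sub>i\<^sub>n\<close>. The projection of \<open>g\<^sub>l\<^sub>k - g\<^sub>l - g\<^sub>k\<close> onto the groups \<open>l, j\<close> splits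
  into four such error terms, each for a function with \<open>E|\<cdot>| \<le> 2 E|f| \<le> 2 \<surd>E f\<^sup>2\<close>.\<close>

section \<open>Finite distributions\<close>

definition pr :: "'a::finite pmf \<Rightarrow> 'a set \<Rightarrow> real" where
  "pr mu A = (\<Sum>x\<in>A. pmf mu x)"

definition expect :: "'a::finite pmf \<Rightarrow> ('a \<Rightarrow> real) \<Rightarrow> real" where
  "expect mu h = (\<Sum>x\<in>UNIV. pmf mu x * h x)"

lemma prob_eq_pr: "measure_pmf.prob mu A = pr mu A"
  unfolding pr_def by (rule measure_measure_pmf_finite) simp

lemma expectation_eq_expect: "measure_pmf.expectation mu h = expect mu h"
  unfolding expect_def by (subst integral_measure_pmf_real[of UNIV]) (auto simp: mult.commute)

lemma pr_nonneg: "0 \<le> pr mu A"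
  unfolding pr_def by (simp add: sum_nonneg)

lemma pr_mono: "A \<subseteq> B \<Longrightarrow> pr mu A \<le> pr mu B"
  unfolding pr_def by (rule sum_mono2) auto

lemma pr_UNIV: "pr mu UNIV = 1"
  unfolding pr_def by (rule sum_pmf_eq_1) auto

lemma pr_singleton: "pr mu {x} = pmf mu x"
  unfolding pr_def by simp

lemma pr_Diff: "pr mu (A - B) = pr mu A - pr mu (A \<inter> B)"
proof -
  have "pr mu A = pr mu (A - B) + pr mu (A \<inter> B)"
    unfolding pr_def by (subst sum.union_disjoint[symmetric]) (auto intro!: sum.cong)
  then show ?thesis by simp
qed

lemma pr_Int_eq_0: "pr mu A = 0 \<Longrightarrow> pr mu (A \<inter> B) = 0"
  using pr_mono[of "A \<inter> B" A mu] pr_nonneg[of mu "A \<inter> B"] by simp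

lemma pmf_eq_0_if_pr_eq_0: "pr mu A = 0 \<Longrightarrow> x \<in> A \<Longrightarrow> pmf mu x = 0"
  using pr_mono[of "{x}" A mu] pr_singleton[of mu x] pmf_nonneg[of mu x] by simp

lemma pr_nonzero_if_in_support: "x \<in> set_pmf mu \<Longrightarrow> x \<in> A \<Longrightarrow> pr mu A \<noteq> 0"
  using pmf_eq_0_if_pr_eq_0 set_pmf_iff by metis

lemma pr_Int_support: "pr mu A = pr mu (A \<inter> set_pmf mu)"
  unfolding pr_def by (rule sum.mono_neutral_right) (auto simp: set_pmf_iff)

lemma support_meets_if_pr_nonzero: "pr mu A \<noteq> 0 \<Longrightarrow> \<exists>x\<in>A. x \<in> set_pmf mu"
  using pr_Int_support[of mu A] unfolding pr_def by (metis disjoint_iff sum.empty)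

lemma pr_cong_support:
  assumes "\<And>x. x \<in> set_pmf mu \<Longrightarrow> x \<in> A \<longleftrightarrow> x \<in> B"
  shows "pr mu A = pr mu B"
proof -
  have "A \<inter> set_pmf mu = B \<inter> set_pmf mu" using assms by blast
  then show ?thesis by (metis pr_Int_support)
qed

lemma pr_cond_deviation_Compl:
  assumes "pr mu A \<noteq> 0"
  shows "\<bar>pr mu (- B \<inter> A) / pr mu A - pr mu (- B)\<bar> = \<bar>pr mu (B \<inter> A) / pr mu A - pr mu B\<bar>"
proof -
  have "pr mu (- B \<inter> A) = pr mu A - pr mu (B \<inter> A)"
    using pr_Diff[of mu A B] by (simp add: Diff_eq Int_commute)
  moreover have "pr mu (- B) = 1 - pr mu B"
    using pr_Diff[of mu UNIV B] by (simp add: Compl_eq_Diff_UNIV pr_UNIV)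
  ultimately show ?thesis
    using assms by (simp add: diff_divide_distrib abs_minus_commute)
qed

lemma expect_diff: "expect mu (\<lambda>x. a x - b x) = expect mu a - expect mu b"
  unfolding expect_def by (simp add: sum_subtractf right_diff_distrib)

lemma expect_mono: "(\<And>x. a x \<le> b x) \<Longrightarrow> expect mu a \<le> expect mu b"
  unfolding expect_def by (intro sum_mono mult_left_mono) auto

lemma expect_abs_diff_le:
  "expect mu (\<lambda>x. \<bar>a x - b x\<bar>) \<le> expect mu (\<lambda>x. \<bar>a x\<bar>) + expect mu (\<lambda>x. \<bar>b x\<bar>)"
proof -
  have "expect mu (\<lambda>x. \<bar>a x - b x\<bar>) \<le> expect mu (\<lambda>x. \<bar>a x\<bar> + \<bar>b x\<bar>)"
    by (rule expect_mono) simp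
  then show ?thesis unfolding expect_def by (simp add: distrib_left sum.distrib)
qed

lemma expect_abs_le_sqrt: "expect mu (\<lambda>x. \<bar>f x\<bar>) \<le> sqrt (expect mu (\<lambda>x. (f x)\<^sup>2))"
proof -
  let ?c = "expect mu (\<lambda>x. \<bar>f x\<bar>)"
  have "0 \<le> (\<Sum>x\<in>UNIV. pmf mu x * (\<bar>f x\<bar> - ?c)\<^sup>2)"
    by (intro sum_nonneg) auto
  also have "\<dots> = (\<Sum>x\<in>UNIV. pmf mu x * (f x)\<^sup>2) - 2 * ?c * (\<Sum>x\<in>UNIV. pmf mu x * \<bar>f x\<bar>)
      + ?c\<^sup>2 * (\<Sum>x\<in>UNIV. pmf mu x)"
    by (simp add: power2_eq_square algebra_simps sum.distrib sum_subtractf sum_distrib_left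
        sum_distrib_right)
  also have "\<dots> = expect mu (\<lambda>x. (f x)\<^sup>2) - ?c\<^sup>2"
    using pr_UNIV[of mu] unfolding expect_def pr_def by (simp add: power2_eq_square)
  finally have "?c\<^sup>2 \<le> expect mu (\<lambda>x. (f x)\<^sup>2)" by simp
  then show ?thesis by (simp add: real_le_rsqrt)
qed

section \<open>Conditioning on a set of features\<close>

definition depends_only_on :: "'n set \<Rightarrow> (('n \<Rightarrow> bool) \<Rightarrow> 'b) \<Rightarrow> bool" where
  "depends_only_on H q \<longleftrightarrow> (\<forall>x y. (\<forall>i\<in>H. x i = y i) \<longrightarrow> q x = q y)"

lemma agree_refl: "x \<in> agree H x"
  unfolding agree_def by simp

lemma agree_eq: "y \<in> agree H x \<Longrightarrow> agree H y = agree H x"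
  unfolding agree_def by auto

lemma depends_only_on_agree: "depends_only_on H q \<Longrightarrow> y \<in> agree H x \<Longrightarrow> q y = q x"
  unfolding depends_only_on_def agree_def by simp

lemma depends_only_on_mono: "depends_only_on H q \<Longrightarrow> H \<subseteq> H' \<Longrightarrow> depends_only_on H' q"
  unfolding depends_only_on_def by blast

lemma depends_only_on_diff:
  "depends_only_on H a \<Longrightarrow> depends_only_on H b \<Longrightarrow> depends_only_on H (\<lambda>y. a y - b y)"
  unfolding depends_only_on_def by metis

lemma cond_exp_eq_pr: "cond_exp mu H h x = (if pr mu (agree H x) = 0 then 0
    else (\<Sum>y\<in>agree H x. pmf mu y * h y) / pr mu (agree H x))"
  unfolding cond_exp_def prob_eq_pr ..

lemma depends_only_on_cond_exp:
  fixes H :: "'n::finite set"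
  shows "depends_only_on H (cond_exp mu H h)"
  unfolding depends_only_on_def
proof (intro allI impI)
  fix x y :: "'n \<Rightarrow> bool"
  assume "\<forall>i\<in>H. x i = y i"
  then have "agree H x = agree H y" unfolding agree_def by auto
  then show "cond_exp mu H h x = cond_exp mu H h y" unfolding cond_exp_def by simp
qed

lemma cond_exp_diff:
  "cond_exp mu H (\<lambda>y. a y - b y) x = cond_exp mu H a x - cond_exp mu H b x"
  by (simp add: cond_exp_eq_pr sum_subtractf right_diff_distrib diff_divide_distrib)

lemma cond_exp_depends_only_on:
  assumes "depends_only_on H q" "pr mu (agree H x) \<noteq> 0"
  shows "cond_exp mu H q x = q x"
proof -
  have "(\<Sum>y\<in>agree H x. pmf mu y * q y) = (\<Sum>y\<in>agree H x. pmf mu y * q x)"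
    using assms(1) by (intro sum.cong) (auto dest: depends_only_on_agree)
  also have "\<dots> = pr mu (agree H x) * q x"
    unfolding pr_def by (simp add: sum_distrib_right)
  finally show ?thesis using assms(2) by (simp add: cond_exp_eq_pr)
qed

lemma abs_cond_exp_le_cond_exp_abs: "\<bar>cond_exp mu H h x\<bar> \<le> cond_exp mu H (\<lambda>y. \<bar>h y\<bar>) x"
proof (cases "pr mu (agree H x) = 0")
  case False
  have "\<bar>\<Sum>y\<in>agree H x. pmf mu y * h y\<bar> \<le> (\<Sum>y\<in>agree H x. pmf mu y * \<bar>h y\<bar>)"
    using sum_abs[of "\<lambda>y. pmf mu y * h y"] by (simp add: abs_mult)
  then show ?thesis
    using False pr_nonneg[of mu "agree H x"]
    by (simp add: cond_exp_eq_pr abs_divide divide_right_mono)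
qed (simp add: cond_exp_eq_pr)

lemma abs_cond_exp_le:
  assumes "\<And>y. y \<in> set_pmf mu \<Longrightarrow> \<bar>q y\<bar> \<le> B"
  shows "\<bar>cond_exp mu H q x\<bar> \<le> B"
proof (cases "pr mu (agree H x) = 0")
  case True
  have "0 \<le> B"
    using assms[of x] assms set_pmf_not_empty[of mu] by (meson abs_ge_zero all_not_in_conv order_trans)
  then show ?thesis using True by (simp add: cond_exp_eq_pr)
next
  case False
  have "(\<Sum>y\<in>agree H x. pmf mu y * \<bar>q y\<bar>) \<le> (\<Sum>y\<in>agree H x. pmf mu y * B)"
    using assms by (intro sum_mono) (metis mult_left_mono mult_not_zero order_refl pmf_nonneg set_pmf_iff)
  also have "\<dots> = pr mu (agree H x) * B"
    unfolding pr_def by (simp add: sum_distrib_right)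
  finally have "cond_exp mu H (\<lambda>y. \<bar>q y\<bar>) x \<le> B"
    using False pr_nonneg[of mu "agree H x"]
    by (simp add: cond_exp_eq_pr pos_divide_le_eq mult.commute)
  then show ?thesis using abs_cond_exp_le_cond_exp_abs order_trans by blast
qed

lemma sum_cond_exp_finer:
  assumes "H \<subseteq> H'"
  shows "(\<Sum>y\<in>agree H x. pmf mu y * cond_exp mu H' h y) = (\<Sum>y\<in>agree H x. pmf mu y * h y)"
proof -
  let ?A = "agree H x" and ?B = "\<lambda>y. agree H' y"
  let ?F = "\<lambda>y z. pmf mu y * pmf mu z * h z / pr mu (?B z)"
  have expand: "pmf mu y * cond_exp mu H' h y = (\<Sum>z\<in>?B y. ?F y z)" for y
  proof (cases "pr mu (?B y) = 0")
    case True
    then have "pmf mu y = 0" using pmf_eq_0_if_pr_eq_0 agree_refl by metis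
    then show ?thesis by simp
  next
    case False
    have "(\<Sum>z\<in>?B y. ?F y z) = (\<Sum>z\<in>?B y. pmf mu y * pmf mu z * h z / pr mu (?B y))"
      by (intro sum.cong refl) (simp add: agree_eq)
    also have "\<dots> = pmf mu y * ((\<Sum>z\<in>?B y. pmf mu z * h z) / pr mu (?B y))"
      by (simp add: sum_divide_distrib sum_distrib_left mult.assoc)
    finally show ?thesis using False by (simp add: cond_exp_eq_pr)
  qed
  have swap: "(\<Sum>y\<in>?A. \<Sum>z\<in>?B y. ?F y z) = (\<Sum>z\<in>?A. \<Sum>y\<in>?B z. ?F y z)"
  proof -
    have fibre: "{y. y \<in> ?A \<and> z \<in> ?B y} = (if z \<in> ?A then ?B z else {})" for z
      using assms unfolding agree_def by auto
    have "(\<Sum>y\<in>?A. \<Sum>z\<in>?B y. ?F y z) = (\<Sum>z\<in>UNIV. \<Sum>y\<in>{y. y \<in> ?A \<and> z \<in> ?B y}. ?F y z)"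
      using sum.swap_restrict[of ?A UNIV ?F "\<lambda>y z. z \<in> ?B y"] by simp
    also have "\<dots> = (\<Sum>z\<in>UNIV. if z \<in> ?A then (\<Sum>y\<in>?B z. ?F y z) else 0)"
      unfolding fibre by (intro sum.cong) auto
    finally show ?thesis by (simp add: sum.If_cases)
  qed
  have collapse: "(\<Sum>y\<in>?B z. ?F y z) = pmf mu z * h z" for z
  proof -
    have "(\<Sum>y\<in>?B z. ?F y z) = pr mu (?B z) * (pmf mu z * h z) / pr mu (?B z)"
      unfolding pr_def by (simp add: sum_divide_distrib[symmetric] sum_distrib_right mult.assoc)
    then show ?thesis
      using pmf_eq_0_if_pr_eq_0[of mu "?B z" z] agree_refl[of z H'] by (cases "pr mu (?B z) = 0") auto
  qed
  show ?thesis unfolding expand swap collapse ..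
qed

lemma cond_exp_tower: "H \<subseteq> H' \<Longrightarrow> cond_exp mu H (cond_exp mu H' h) x = cond_exp mu H h x"
  unfolding cond_exp_eq_pr[of mu H] by (simp add: sum_cond_exp_finer)

lemma cond_exp_empty: "cond_exp mu {} h x = expect mu h"
proof -
  have "agree {} x = UNIV" unfolding agree_def by simp
  then show ?thesis by (simp add: cond_exp_eq_pr pr_UNIV expect_def)
qed

lemma expect_cond_exp: "expect mu (cond_exp mu H h) = expect mu h"
  using cond_exp_tower[of "{}" H mu h undefined] by (simp add: cond_exp_empty)

lemma expect_abs_cond_exp_le: "expect mu (\<lambda>x. \<bar>cond_exp mu H h x\<bar>) \<le> expect mu (\<lambda>x. \<bar>h x\<bar>)"
  by (rule order_trans[OF expect_mono[OF abs_cond_exp_le_cond_exp_abs]]) (simp add: expect_cond_exp)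

lemma cond_exp_indicator:
  assumes "pr mu (agree H y) \<noteq> 0"
  shows "cond_exp mu H (\<lambda>v. if v i then 1 else 0) y = pr mu ({v. v i} \<inter> agree H y) / pr mu (agree H y)"
proof -
  have "pr mu ({v. v i} \<inter> agree H y) = (\<Sum>v\<in>agree H y. pmf mu v * (if v i then 1 else 0))"
    unfolding pr_def by (subst Int_commute, subst sum.inter_restrict) (auto intro: sum.cong)
  then show ?thesis using assms unfolding cond_exp_eq_pr by simp
qed

lemma depends_only_on_gJ: "depends_only_on (grp -` J) (gJ mu grp f J)"
  unfolding gJ_def by (rule depends_only_on_cond_exp)

lemma expect_gJ: "expect mu (gJ mu grp f J) = 0"
  unfolding gJ_def expect_cond_exp expect_diff by simp

lemma expect_abs_gJ_le: "expect mu (\<lambda>x. \<bar>gJ mu grp f J x\<bar>) \<le> 2 * expect mu (\<lambda>x. \<bar>f x\<bar>)"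
  unfolding gJ_def
  using expect_abs_cond_exp_le[of mu "grp -` J" "\<lambda>y. f y - cond_exp mu (- (grp -` J)) f y"]
    expect_abs_diff_le[of mu f "cond_exp mu (- (grp -` J)) f"] expect_abs_cond_exp_le[of mu "- (grp -` J)" f]
  by linarith

lemma cond_exp_gJ_superset_minus_gJ:
  assumes "J \<subseteq> J'"
  shows "cond_exp mu (grp -` J) (gJ mu grp f J') x - gJ mu grp f J x
    = cond_exp mu (grp -` J) (\<lambda>y. cond_exp mu (- (grp -` J)) f y - cond_exp mu (- (grp -` J')) f y) x"
proof -
  have "grp -` J \<subseteq> grp -` J'" using assms by auto
  then show ?thesis
    unfolding gJ_def cond_exp_tower[OF \<open>grp -` J \<subseteq> grp -` J'\<close>] cond_exp_diff by simp
qed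

section \<open>Integrating out a set of features\<close>

text \<open>Every value of \<open>X\<^sub>G\<close> has exactly one representative in \<open>supported_on G\<close>.\<close>

definition supported_on :: "'n set \<Rightarrow> ('n \<Rightarrow> bool) set" where
  "supported_on G = {t. \<forall>i. i \<notin> G \<longrightarrow> \<not> t i}"

text \<open>\<open>marginalize mu G h y\<close> averages \<open>h\<close> over \<open>X\<^sub>G\<close> drawn from its marginal law, with the
  coordinates outside \<open>G\<close> frozen at \<open>y\<close>; \<open>approx_indep mu G d\<close> says that conditioning on
  \<open>X\<^sub>-\<^sub>G\<close> moves the probability of each value of \<open>X\<^sub>G\<close> by at most \<open>d\<close>.\<close>

definition marginalize :: "('n::finite \<Rightarrow> bool) pmf \<Rightarrow> 'n set \<Rightarrow> (('n \<Rightarrow> bool) \<Rightarrow> real)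
    \<Rightarrow> ('n \<Rightarrow> bool) \<Rightarrow> real" where
  "marginalize mu G h y = (\<Sum>t\<in>supported_on G. pr mu (agree G t) * h (override_on y t G))"

definition approx_indep :: "('n::finite \<Rightarrow> bool) pmf \<Rightarrow> 'n set \<Rightarrow> real \<Rightarrow> bool" where
  "approx_indep mu G d \<longleftrightarrow> (\<forall>t z. pr mu (agree (- G) z) \<noteq> 0 \<longrightarrow>
     \<bar>pr mu (agree G t \<inter> agree (- G) z) / pr mu (agree (- G) z) - pr mu (agree G t)\<bar> \<le> d)"

lemma agree_Int_agree_Compl: "agree H t \<inter> agree (- H) y = {override_on y t H}"
  unfolding agree_def override_on_def by auto

lemma sum_agree_partition:
  fixes G :: "'n::finite set"
  assumes "\<And>v. \<exists>!s. s \<in> S \<and> v \<in> agree G s"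
  shows "(\<Sum>s\<in>S. \<Sum>v\<in>agree G s. \<phi> v) = (\<Sum>v\<in>UNIV. \<phi> v)"
proof -
  have "(\<Sum>s\<in>S. \<Sum>v\<in>agree G s. \<phi> v) = sum \<phi> (\<Union>s\<in>S. agree G s)"
  proof (rule sum.UNION_disjoint[symmetric])
    show "\<forall>s\<in>S. \<forall>s'\<in>S. s \<noteq> s' \<longrightarrow> agree G s \<inter> agree G s' = {}"
    proof (intro ballI impI equals0I)
      fix s s' v
      assume "s \<in> S" "s' \<in> S" "s \<noteq> s'" "v \<in> agree G s \<inter> agree G s'"
      then show False using assms[of v] by blast
    qed
  qed simp_all
  also have "(\<Union>s\<in>S. agree G s) = UNIV"
    using assms by blast
  finally show ?thesis .
qed

lemma sum_supported_on_agree: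
  fixes G :: "'n::finite set"
  shows "(\<Sum>t\<in>supported_on G. \<Sum>v\<in>agree G t. \<phi> v) = (\<Sum>v\<in>UNIV. \<phi> v)"
proof (rule sum_agree_partition)
  fix v
  show "\<exists>!t. t \<in> supported_on G \<and> v \<in> agree G t"
    by (rule ex1I[of _ "\<lambda>i. i \<in> G \<and> v i"]) (auto simp: supported_on_def agree_def)
qed

lemma sum_agree_agree_Compl:
  fixes H :: "'n::finite set"
  shows "(\<Sum>z\<in>agree H x. \<Sum>v\<in>agree (- H) z. \<phi> v) = (\<Sum>v\<in>UNIV. \<phi> v)"
proof (rule sum_agree_partition)
  fix v
  show "\<exists>!z. z \<in> agree H x \<and> v \<in> agree (- H) z"
    by (rule ex1I[of _ "override_on v x H"]) (auto simp: agree_def override_on_def)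
qed

lemma depends_only_on_marginalize:
  assumes "depends_only_on K h"
  shows "depends_only_on (K - G) (marginalize mu G h)"
  unfolding depends_only_on_def
proof (intro allI impI)
  fix x y :: "'a \<Rightarrow> bool"
  assume "\<forall>i\<in>K - G. x i = y i"
  then have "\<forall>i\<in>K. override_on x t G i = override_on y t G i" for t
    unfolding override_on_def by auto
  then have "h (override_on x t G) = h (override_on y t G)" for t
    using assms unfolding depends_only_on_def by blast
  then show "marginalize mu G h x = marginalize mu G h y"
    unfolding marginalize_def by simp
qed

lemma marginalize_eq_expect:
  assumes "depends_only_on G h"
  shows "marginalize mu G h y = expect mu h"
proof -
  have "pr mu (agree G t) * h (override_on y t G) = (\<Sum>v\<in>agree G t. pmf mu v * h v)" for t
  proof -
    have "h v = h (override_on y t G)" if "v \<in> agree G t" for v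
      using assms that unfolding depends_only_on_def agree_def override_on_def by auto
    then show ?thesis unfolding pr_def sum_distrib_right by (intro sum.cong) simp_all
  qed
  then show ?thesis
    unfolding marginalize_def expect_def by (simp add: sum_supported_on_agree)
qed

lemma cond_exp_Compl_eq_sum:
  assumes "pr mu (agree (- G) y) \<noteq> 0"
  shows "cond_exp mu (- G) h y = (\<Sum>t\<in>supported_on G.
    pr mu (agree G t \<inter> agree (- G) y) / pr mu (agree (- G) y) * h (override_on y t G))"
proof -
  let ?A = "agree (- G) y"
  have "(\<Sum>z\<in>?A. pmf mu z * h z) = (\<Sum>v\<in>UNIV. if v \<in> ?A then pmf mu v * h v else 0)"
    by (simp add: sum.If_cases)
  also have "\<dots> = (\<Sum>t\<in>supported_on G. \<Sum>v\<in>agree G t. if v \<in> ?A then pmf mu v * h v else 0)"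
    by (rule sum_supported_on_agree[symmetric])
  also have "\<dots> = (\<Sum>t\<in>supported_on G. \<Sum>v\<in>agree G t \<inter> ?A. pmf mu v * h v)"
    by (simp add: sum.inter_restrict)
  also have "\<dots> = (\<Sum>t\<in>supported_on G. pr mu (agree G t \<inter> ?A) * h (override_on y t G))"
    unfolding agree_Int_agree_Compl pr_def by simp
  finally show ?thesis
    using assms by (simp add: cond_exp_eq_pr sum_divide_distrib)
qed

lemma abs_cond_exp_Compl_minus_marginalize_le:
  assumes "approx_indep mu G d" "pr mu (agree (- G) y) \<noteq> 0"
  shows "\<bar>cond_exp mu (- G) h y - marginalize mu G h y\<bar>
    \<le> d * (\<Sum>t\<in>{t\<in>supported_on G. pr mu (agree G t) \<noteq> 0}. \<bar>h (override_on y t G)\<bar>)"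
proof -
  let ?A = "agree (- G) y" and ?h = "\<lambda>t. h (override_on y t G)"
  let ?e = "\<lambda>t. pr mu (agree G t \<inter> ?A) / pr mu ?A - pr mu (agree G t)"
  have "\<bar>cond_exp mu (- G) h y - marginalize mu G h y\<bar> = \<bar>\<Sum>t\<in>supported_on G. ?e t * ?h t\<bar>"
    unfolding cond_exp_Compl_eq_sum[OF assms(2)] marginalize_def
    by (simp add: sum_subtractf left_diff_distrib)
  also have "\<dots> \<le> (\<Sum>t\<in>supported_on G. \<bar>?e t * ?h t\<bar>)"
    by (rule sum_abs)
  also have "\<dots> \<le> (\<Sum>t\<in>supported_on G. if pr mu (agree G t) \<noteq> 0 then d * \<bar>?h t\<bar> else 0)"
  proof (rule sum_mono)
    fix t
    have "\<bar>?e t\<bar> \<le> d" using assms unfolding approx_indep_def by blast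
    then show "\<bar>?e t * ?h t\<bar> \<le> (if pr mu (agree G t) \<noteq> 0 then d * \<bar>?h t\<bar> else 0)"
      using pr_Int_eq_0[of mu "agree G t" ?A] by (auto simp: abs_mult intro: mult_right_mono)
  qed
  also have "\<dots> = d * (\<Sum>t\<in>{t\<in>supported_on G. pr mu (agree G t) \<noteq> 0}. \<bar>?h t\<bar>)"
    by (simp add: sum.inter_filter[symmetric] sum_distrib_left)
  finally show ?thesis .
qed

lemma sum_abs_override_le_expect:
  assumes "G \<subseteq> K" "depends_only_on K h" "0 < c"
    and "\<And>t. t \<in> supported_on G \<Longrightarrow> pr mu (agree G t) \<noteq> 0 \<Longrightarrow> c \<le> pr mu (agree K (override_on y t G))"
  shows "(\<Sum>t\<in>{t\<in>supported_on G. pr mu (agree G t) \<noteq> 0}. \<bar>h (override_on y t G)\<bar>)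
    \<le> expect mu (\<lambda>v. \<bar>h v\<bar>) / c"
proof -
  let ?S = "{t\<in>supported_on G. pr mu (agree G t) \<noteq> 0}"
  have "c * \<bar>h (override_on y t G)\<bar> \<le> (\<Sum>v\<in>agree G t. pmf mu v * \<bar>h v\<bar>)" if "t \<in> ?S" for t
  proof -
    let ?z = "override_on y t G"
    have "c * \<bar>h ?z\<bar> \<le> pr mu (agree K ?z) * \<bar>h ?z\<bar>"
      using assms(4) that by (auto intro: mult_right_mono)
    also have "\<dots> = (\<Sum>v\<in>agree K ?z. pmf mu v * \<bar>h v\<bar>)"
      unfolding pr_def sum_distrib_right
      by (intro sum.cong refl) (simp add: depends_only_on_agree[OF assms(2)])
    also have "\<dots> \<le> (\<Sum>v\<in>agree G t. pmf mu v * \<bar>h v\<bar>)"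
      using assms(1) by (intro sum_mono2) (auto simp: agree_def override_on_def)
    finally show ?thesis .
  qed
  then have "c * (\<Sum>t\<in>?S. \<bar>h (override_on y t G)\<bar>) \<le> (\<Sum>t\<in>?S. \<Sum>v\<in>agree G t. pmf mu v * \<bar>h v\<bar>)"
    unfolding sum_distrib_left by (rule sum_mono)
  also have "\<dots> \<le> (\<Sum>t\<in>supported_on G. \<Sum>v\<in>agree G t. pmf mu v * \<bar>h v\<bar>)"
    by (rule sum_mono2) (auto intro!: sum_nonneg)
  also have "\<dots> = expect mu (\<lambda>v. \<bar>h v\<bar>)"
    unfolding expect_def by (rule sum_supported_on_agree)
  finally show ?thesis using assms(3) by (simp add: pos_le_divide_eq mult.commute)
qed

lemma expect_eq_sum_agree_Compl:
  assumes "depends_only_on (- G) q"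
  shows "(\<Sum>z\<in>agree G x. pr mu (agree (- G) z) * q z) = expect mu q"
proof -
  have "pr mu (agree (- G) z) * q z = (\<Sum>v\<in>agree (- G) z. pmf mu v * q v)" for z
    unfolding pr_def sum_distrib_right
    by (intro sum.cong refl) (simp add: depends_only_on_agree[OF assms])
  then show ?thesis
    unfolding expect_def by (simp add: sum_agree_agree_Compl)
qed

text \<open>Subtracting \<open>P(X\<^sub>G = x\<^sub>G) E w = 0\<close> turns the weights into the covariances of the events
  \<open>X\<^sub>G = x\<^sub>G\<close> and \<open>X\<^sub>-\<^sub>G = z\<^sub>-\<^sub>G\<close>.\<close>

lemma cond_exp_mul_pr_eq_sum_cov:
  assumes "depends_only_on (- G) w" "expect mu w = 0" "pr mu (agree G x) \<noteq> 0"
  shows "cond_exp mu G w x * pr mu (agree G x) = (\<Sum>z\<in>agree G x.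
    (pr mu (agree G x \<inter> agree (- G) z) - pr mu (agree G x) * pr mu (agree (- G) z)) * w z)"
proof -
  let ?B = "agree G x" and ?A = "\<lambda>z. agree (- G) z"
  have "pmf mu z = pr mu (?B \<inter> ?A z)" if "z \<in> ?B" for z
  proof -
    have "?B \<inter> ?A z = {z}" using that unfolding agree_def by auto
    then show ?thesis by (simp add: pr_singleton)
  qed
  then have "cond_exp mu G w x * pr mu ?B
      = (\<Sum>z\<in>?B. pr mu (?B \<inter> ?A z) * w z) - pr mu ?B * (\<Sum>z\<in>?B. pr mu (?A z) * w z)"
    using assms by (simp add: cond_exp_eq_pr expect_eq_sum_agree_Compl)
  then show ?thesis
    by (simp add: sum_subtractf left_diff_distrib sum_distrib_left mult.assoc)
qed

lemma abs_cond_exp_mean_zero_le: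
  assumes "approx_indep mu G d" "pr mu (agree G x) \<noteq> 0"
    and w: "depends_only_on (- G) w" "expect mu w = 0"
  shows "\<bar>cond_exp mu G w x\<bar> * pr mu (agree G x) \<le> d * expect mu (\<lambda>v. \<bar>w v\<bar>)"
proof -
  let ?B = "agree G x" and ?A = "\<lambda>z. agree (- G) z"
  let ?e = "\<lambda>z. pr mu (?B \<inter> ?A z) - pr mu ?B * pr mu (?A z)"
  have cov_le: "\<bar>?e z\<bar> \<le> d * pr mu (?A z)" for z
  proof (cases "pr mu (?A z) = 0")
    case True
    then show ?thesis using pr_Int_eq_0[of mu "?A z" ?B] by (simp add: Int_commute)
  next
    case False
    then have "?e z = (pr mu (?B \<inter> ?A z) / pr mu (?A z) - pr mu ?B) * pr mu (?A z)"
      by (simp add: field_simps)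
    moreover have "\<bar>pr mu (?B \<inter> ?A z) / pr mu (?A z) - pr mu ?B\<bar> \<le> d"
      using assms(1) False unfolding approx_indep_def by blast
    ultimately show ?thesis
      using pr_nonneg[of mu "?A z"] by (simp add: abs_mult mult_right_mono)
  qed
  have "depends_only_on (- G) (\<lambda>v. \<bar>w v\<bar>)"
    using w(1) unfolding depends_only_on_def by metis
  have "\<bar>cond_exp mu G w x\<bar> * pr mu ?B = \<bar>\<Sum>z\<in>?B. ?e z * w z\<bar>"
    using cond_exp_mul_pr_eq_sum_cov[OF w assms(2)] pr_nonneg[of mu ?B]
    by (metis abs_mult abs_of_nonneg)
  also have "\<dots> \<le> (\<Sum>z\<in>?B. \<bar>?e z * w z\<bar>)"
    by (rule sum_abs)
  also have "\<dots> \<le> (\<Sum>z\<in>?B. d * (pr mu (?A z) * \<bar>w z\<bar>))"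
  proof (rule sum_mono)
    fix z
    show "\<bar>?e z * w z\<bar> \<le> d * (pr mu (?A z) * \<bar>w z\<bar>)"
      using mult_right_mono[OF cov_le[of z] abs_ge_zero[of "w z"]] by (simp add: abs_mult mult.assoc)
  qed
  also have "\<dots> = d * expect mu (\<lambda>v. \<bar>w v\<bar>)"
    unfolding sum_distrib_left[symmetric]
    using \<open>depends_only_on (- G) (\<lambda>v. \<bar>w v\<bar>)\<close> by (simp add: expect_eq_sum_agree_Compl)
  finally show ?thesis .
qed

section \<open>Groups of one-hot features\<close>

locale feature_groups =
  fixes mu :: "('n::finite \<Rightarrow> bool) pmf" and grp :: "'n \<Rightarrow> 'm::finite"
  assumes groups_nonempty: "surj grp"
    and one_hot: "\<And>m. card (grp -` {m}) > 1 \<Longrightarrow> (\<forall>x\<in>set_pmf mu. card {i. grp i = m \<and> x i} = 1)"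
    and pmin_pos: "pmin mu grp > 0"
    and two_groups: "\<exists>m1 m2 :: 'm. m1 \<noteq> m2"
begin

text \<open>On the support, the value of a group is determined by one literal: the feature itself for
  a singleton group, the active indicator for a one-hot group.\<close>

lemma group_value_literal:
  assumes w: "w \<in> set_pmf mu"
  obtains i where "grp i = m" "\<And>v. v \<in> set_pmf mu \<Longrightarrow> v \<in> agree (grp -` {m}) w \<longleftrightarrow> v i = w i"
proof (cases "card (grp -` {m}) > 1")
  case False
  obtain i0 where "grp i0 = m" using groups_nonempty by (metis surjD)
  then have "card (grp -` {m}) > 0" by (auto simp: card_gt_0_iff)
  then have "card (grp -` {m}) = 1" using False by linarith
  then obtain i where i: "grp -` {m} = {i}" by (rule card_1_singletonE)
  show ?thesis
  proof (rule that)
    show "grp i = m" using i by blast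
    show "v \<in> agree (grp -` {m}) w \<longleftrightarrow> v i = w i" for v
      unfolding i agree_def by simp
  qed
next
  case True
  have card1: "card {i. grp i = m \<and> v i} = 1" if "v \<in> set_pmf mu" for v
    using one_hot[OF True] that by blast
  obtain i where wi: "{i. grp i = m \<and> w i} = {i}"
    using card1[OF w] by (rule card_1_singletonE)
  have gi: "grp i = m" "w i" using wi by blast+
  have "v \<in> agree (grp -` {m}) w \<longleftrightarrow> v i = w i" if v: "v \<in> set_pmf mu" for v
  proof
    show "v i = w i" if "v \<in> agree (grp -` {m}) w"
      using that gi(1) unfolding agree_def by simp
  next
    assume "v i = w i"
    moreover obtain i' where "{i. grp i = m \<and> v i} = {i'}"
      using card1[OF v] by (rule card_1_singletonE)
    ultimately have "{i. grp i = m \<and> v i} = {i. grp i = m \<and> w i}" using wi gi by auto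
    then show "v \<in> agree (grp -` {m}) w" unfolding agree_def by blast
  qed
  then show ?thesis using that gi(1) by blast
qed

lemma pmin_le_pr_literals:
  assumes "grp i \<noteq> grp j"
  shows "pmin mu grp \<le> pr mu {x. x i = a \<and> x j = b}"
proof -
  let ?X = "{measure_pmf.prob mu {x. x i = a \<and> x j = b} | i j a b. grp i \<noteq> grp j}"
  have "?X \<subseteq> (\<lambda>(i, j, a, b). measure_pmf.prob mu {x. x i = a \<and> x j = b}) ` UNIV"
  proof
    fix r assume "r \<in> ?X"
    then obtain i j a b where "r = measure_pmf.prob mu {x. x i = a \<and> x j = b}" by blast
    then show "r \<in> (\<lambda>(i, j, a, b). measure_pmf.prob mu {x. x i = a \<and> x j = b}) ` UNIV"
      by (intro image_eqI[where x="(i, j, a, b)"]) auto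
  qed
  then have "finite ?X" by (rule finite_subset) simp
  then show ?thesis
    unfolding pmin_def prob_eq_pr[symmetric] by (rule Min_le) (use assms in blast)
qed

lemma pmin_le_pr_two_groups:
  assumes "w1 \<in> set_pmf mu" "w2 \<in> set_pmf mu" "m1 \<noteq> m2"
  shows "pmin mu grp \<le> pr mu (agree (grp -` {m1}) w1 \<inter> agree (grp -` {m2}) w2)"
proof -
  obtain i1 where i1: "grp i1 = m1"
    "\<And>v. v \<in> set_pmf mu \<Longrightarrow> v \<in> agree (grp -` {m1}) w1 \<longleftrightarrow> v i1 = w1 i1"
    using group_value_literal[OF assms(1)] by blast
  obtain i2 where i2: "grp i2 = m2"
    "\<And>v. v \<in> set_pmf mu \<Longrightarrow> v \<in> agree (grp -` {m2}) w2 \<longleftrightarrow> v i2 = w2 i2"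
    using group_value_literal[OF assms(2)] by blast
  have "pmin mu grp \<le> pr mu {x. x i1 = w1 i1 \<and> x i2 = w2 i2}"
    using assms(3) i1(1) i2(1) by (intro pmin_le_pr_literals) simp
  also have "\<dots> = pr mu (agree (grp -` {m1}) w1 \<inter> agree (grp -` {m2}) w2)"
    using i1(2) i2(2) by (intro pr_cong_support) simp
  finally show ?thesis .
qed

lemma pmin_le_pr_group:
  assumes "pr mu (agree (grp -` {m}) t) \<noteq> 0"
  shows "pmin mu grp \<le> pr mu (agree (grp -` {m}) t)"
proof -
  obtain w where w: "w \<in> agree (grp -` {m}) t" "w \<in> set_pmf mu"
    using support_meets_if_pr_nonzero[OF assms] by blast
  obtain m' where "m' \<noteq> m" using two_groups by metis
  then have "pmin mu grp \<le> pr mu (agree (grp -` {m}) w \<inter> agree (grp -` {m'}) w)"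
    using w(2) by (intro pmin_le_pr_two_groups) auto
  also have "\<dots> \<le> pr mu (agree (grp -` {m}) w)"
    by (rule pr_mono) simp
  finally show ?thesis using agree_eq[OF w(1)] by simp
qed

lemma delta0_nonneg: "0 \<le> delta0 mu grp"
  and dev_le_delta0: "x \<in> set_pmf mu \<Longrightarrow> dev mu grp m x \<le> delta0 mu grp"
proof -
  let ?D = "\<lambda>m. {\<delta>. \<delta> \<ge> 0 \<and> measure_pmf.prob mu {x. dev mu grp m x \<le> \<delta>} = 1}"
  have nonempty: "?D m \<noteq> {}" for m
  proof -
    let ?d = "max 0 (Max (range (dev mu grp m)))"
    have "dev mu grp m x \<le> Max (range (dev mu grp m))" for x
      by (rule Max_ge) auto
    then have "dev mu grp m x \<le> ?d" for x
      using max.coboundedI2 by blast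
    then have "{x. dev mu grp m x \<le> ?d} = UNIV"
      by blast
    then have "?d \<in> ?D m" by (simp add: prob_eq_pr pr_UNIV)
    then show ?thesis by blast
  qed
  have le_delta0: "Inf (?D m) \<le> delta0 mu grp" for m
    unfolding delta0_def by (rule Max_ge) auto
  have "0 \<le> Inf (?D m)" for m
    by (rule cInf_greatest[OF nonempty]) auto
  then show "0 \<le> delta0 mu grp"
    using le_delta0 order_trans by blast
  assume x: "x \<in> set_pmf mu"
  have "dev mu grp m x \<le> Inf (?D m)"
  proof (rule cInf_greatest[OF nonempty])
    fix d
    assume "d \<in> ?D m"
    then have "pr mu (UNIV - {x. dev mu grp m x \<le> d}) = 0"
      by (simp add: prob_eq_pr pr_Diff pr_UNIV)
    then show "dev mu grp m x \<le> d"
      using pr_nonzero_if_in_support[OF x, of "UNIV - {x. dev mu grp m x \<le> d}"] by blast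
  qed
  then show "dev mu grp m x \<le> delta0 mu grp"
    using le_delta0[of m] by linarith
qed

lemma literal_cond_deviation_le:
  assumes "grp i = m" and y: "y \<in> set_pmf mu"
  shows "\<bar>pr mu ({v. v i = b} \<inter> agree (- (grp -` {m})) y) / pr mu (agree (- (grp -` {m})) y)
    - pr mu {v. v i = b}\<bar> \<le> delta0 mu grp"
proof -
  let ?A = "agree (- (grp -` {m})) y"
  have py: "pr mu ?A \<noteq> 0"
    using y agree_refl by (rule pr_nonzero_if_in_support)
  have "\<bar>cond_exp mu (- (grp -` {m})) (\<lambda>v. if v i then 1 else 0) y - pr mu {v. v i}\<bar>
      \<le> dev mu grp m y"
    unfolding dev_def prob_eq_pr[symmetric] by (rule Max_ge) (use assms(1) in auto)
  then have "\<bar>pr mu ({v. v i} \<inter> ?A) / pr mu ?A - pr mu {v. v i}\<bar> \<le> delta0 mu grp"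
    using cond_exp_indicator[OF py] dev_le_delta0[OF y, of m] by simp
  then show ?thesis
    using pr_cond_deviation_Compl[OF py, of "{v. v i}"] by (cases b) (simp_all add: Compl_eq)
qed

lemma approx_indep_group: "approx_indep mu (grp -` {m}) (delta0 mu grp)"
  unfolding approx_indep_def
proof (intro allI impI)
  fix t z
  let ?G = "grp -` {m}"
  assume "pr mu (agree (- ?G) z) \<noteq> 0"
  then obtain y where y: "y \<in> agree (- ?G) z" "y \<in> set_pmf mu"
    using support_meets_if_pr_nonzero by blast
  show "\<bar>pr mu (agree ?G t \<inter> agree (- ?G) z) / pr mu (agree (- ?G) z) - pr mu (agree ?G t)\<bar>
      \<le> delta0 mu grp"
  proof (cases "pr mu (agree ?G t) = 0")
    case True
    then show ?thesis using pr_Int_eq_0[OF True] delta0_nonneg by simp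
  next
    case False
    then obtain w where w: "w \<in> agree ?G t" "w \<in> set_pmf mu"
      using support_meets_if_pr_nonzero by blast
    obtain i where i: "grp i = m" "\<And>v. v \<in> set_pmf mu \<Longrightarrow> v \<in> agree ?G w \<longleftrightarrow> v i = w i"
      using group_value_literal[OF w(2)] by blast
    have "pr mu (agree ?G t \<inter> agree (- ?G) z) = pr mu ({v. v i = w i} \<inter> agree (- ?G) y)"
      and "pr mu (agree ?G t) = pr mu {v. v i = w i}"
      unfolding agree_eq[OF w(1), symmetric] agree_eq[OF y(1)]
      by (auto intro!: pr_cong_support simp: i(2))
    then show ?thesis
      using literal_cond_deviation_le[OF i(1) y(2)] agree_eq[OF y(1)] by simp
  qed
qed

lemma abs_cond_exp_Compl_group_minus_marginalize_le:
  assumes h: "depends_only_on (grp -` {l, k}) h" and "l \<noteq> k" and y: "y \<in> set_pmf mu"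
  shows "\<bar>cond_exp mu (- (grp -` {k})) h y - marginalize mu (grp -` {k}) h y\<bar>
    \<le> delta0 mu grp * expect mu (\<lambda>v. \<bar>h v\<bar>) / pmin mu grp"
proof -
  let ?G = "grp -` {k}"
  let ?S = "\<Sum>t\<in>{t\<in>supported_on ?G. pr mu (agree ?G t) \<noteq> 0}. \<bar>h (override_on y t ?G)\<bar>"
  have S_le: "?S \<le> expect mu (\<lambda>v. \<bar>h v\<bar>) / pmin mu grp"
  proof (rule sum_abs_override_le_expect[OF _ h pmin_pos])
    fix t
    assume "pr mu (agree ?G t) \<noteq> 0"
    then obtain w where w: "w \<in> agree ?G t" "w \<in> set_pmf mu"
      using support_meets_if_pr_nonzero by blast
    have "pmin mu grp \<le> pr mu (agree (grp -` {l}) y \<inter> agree ?G w)"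
      using y w(2) \<open>l \<noteq> k\<close> by (rule pmin_le_pr_two_groups)
    also have "\<dots> \<le> pr mu (agree (grp -` {l, k}) (override_on y t ?G))"
      using w(1) \<open>l \<noteq> k\<close> by (intro pr_mono) (auto simp: agree_def override_on_def)
    finally show "pmin mu grp \<le> pr mu (agree (grp -` {l, k}) (override_on y t ?G))" .
  qed auto
  have "pr mu (agree (- ?G) y) \<noteq> 0"
    using y agree_refl by (rule pr_nonzero_if_in_support)
  then have "\<bar>cond_exp mu (- ?G) h y - marginalize mu ?G h y\<bar> \<le> delta0 mu grp * ?S"
    by (rule abs_cond_exp_Compl_minus_marginalize_le[OF approx_indep_group])
  also have "\<dots> \<le> delta0 mu grp * (expect mu (\<lambda>v. \<bar>h v\<bar>) / pmin mu grp)"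
    using S_le delta0_nonneg by (rule mult_left_mono)
  finally show ?thesis by simp
qed


lemma abs_cond_exp_minus_marginalize_le:
  assumes h: "depends_only_on (grp -` {l, k}) h" and "l \<noteq> k"
    and H: "grp -` {l} \<subseteq> H" "H \<subseteq> - (grp -` {k})" and x: "x \<in> set_pmf mu"
  shows "\<bar>cond_exp mu H h x - marginalize mu (grp -` {k}) h x\<bar>
    \<le> delta0 mu grp * expect mu (\<lambda>v. \<bar>h v\<bar>) / pmin mu grp"
proof -
  let ?m = "marginalize mu (grp -` {k}) h"
  have "depends_only_on H ?m"
    using depends_only_on_marginalize[OF h] by (rule depends_only_on_mono) (use H(1) in auto)
  then have "cond_exp mu H ?m x = ?m x"
    using x agree_refl by (intro cond_exp_depends_only_on pr_nonzero_if_in_support)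
  then have "cond_exp mu H h x - ?m x = cond_exp mu H (\<lambda>y. cond_exp mu (- (grp -` {k})) h y - ?m y) x"
    by (simp add: cond_exp_diff cond_exp_tower[OF H(2)])
  also have "\<bar>\<dots>\<bar> \<le> delta0 mu grp * expect mu (\<lambda>v. \<bar>h v\<bar>) / pmin mu grp"
    by (intro abs_cond_exp_le abs_cond_exp_Compl_group_minus_marginalize_le[OF h \<open>l \<noteq> k\<close>])
  finally show ?thesis .
qed

lemma abs_cond_exp_group_mean_zero_le:
  assumes "depends_only_on (- (grp -` {l})) w" "expect mu w = 0" and x: "x \<in> set_pmf mu"
  shows "\<bar>cond_exp mu (grp -` {l}) w x\<bar> \<le> delta0 mu grp * expect mu (\<lambda>v. \<bar>w v\<bar>) / pmin mu grp"
proof -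
  let ?G = "grp -` {l}"
  have px: "pr mu (agree ?G x) \<noteq> 0"
    using x agree_refl by (rule pr_nonzero_if_in_support)
  have "\<bar>cond_exp mu ?G w x\<bar> * pmin mu grp \<le> \<bar>cond_exp mu ?G w x\<bar> * pr mu (agree ?G x)"
    using pmin_le_pr_group[OF px] by (rule mult_left_mono) simp
  also have "\<dots> \<le> delta0 mu grp * expect mu (\<lambda>v. \<bar>w v\<bar>)"
    using approx_indep_group px assms(1,2) by (rule abs_cond_exp_mean_zero_le)
  finally show ?thesis using pmin_pos by (simp add: pos_le_divide_eq)
qed

lemma abs_cond_exp_gJ_minus_marginalize_le:
  assumes "J \<subseteq> {l, k}" "l \<noteq> k" "grp -` {l} \<subseteq> H" "H \<subseteq> - (grp -` {k})" "x \<in> set_pmf mu"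
  shows "\<bar>cond_exp mu H (gJ mu grp f J) x - marginalize mu (grp -` {k}) (gJ mu grp f J) x\<bar>
    \<le> 2 * delta0 mu grp * expect mu (\<lambda>y. \<bar>f y\<bar>) / pmin mu grp"
proof -
  have "depends_only_on (grp -` {l, k}) (gJ mu grp f J)"
    using assms(1) by (intro depends_only_on_mono[OF depends_only_on_gJ]) auto
  from abs_cond_exp_minus_marginalize_le[OF this assms(2-5)]
  have "\<bar>cond_exp mu H (gJ mu grp f J) x - marginalize mu (grp -` {k}) (gJ mu grp f J) x\<bar>
      \<le> delta0 mu grp * expect mu (\<lambda>y. \<bar>gJ mu grp f J y\<bar>) / pmin mu grp" .
  also have "\<dots> \<le> delta0 mu grp * (2 * expect mu (\<lambda>y. \<bar>f y\<bar>)) / pmin mu grp"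
    using expect_abs_gJ_le delta0_nonneg pmin_pos by (intro divide_right_mono mult_left_mono) auto
  finally show ?thesis by (simp add: ac_simps)
qed

lemma abs_cond_exp_group_gJ_minus_gJ_le:
  assumes "l \<in> J" and x: "x \<in> set_pmf mu"
  shows "\<bar>cond_exp mu (grp -` {l}) (gJ mu grp f J) x - gJ mu grp f {l} x\<bar>
    \<le> 2 * delta0 mu grp * expect mu (\<lambda>y. \<bar>f y\<bar>) / pmin mu grp"
proof -
  let ?G = "grp -` {l}" and ?K = "grp -` J"
  let ?w = "\<lambda>y. cond_exp mu (- ?G) f y - cond_exp mu (- ?K) f y"
  have "depends_only_on (- ?G) ?w"
    using assms(1) by (intro depends_only_on_diff depends_only_on_cond_exp
        depends_only_on_mono[OF depends_only_on_cond_exp]) auto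
  moreover have "expect mu ?w = 0"
    by (simp add: expect_diff expect_cond_exp)
  ultimately have "\<bar>cond_exp mu ?G ?w x\<bar> \<le> delta0 mu grp * expect mu (\<lambda>y. \<bar>?w y\<bar>) / pmin mu grp"
    using x by (rule abs_cond_exp_group_mean_zero_le)
  also have "\<dots> \<le> delta0 mu grp * (2 * expect mu (\<lambda>y. \<bar>f y\<bar>)) / pmin mu grp"
  proof -
    have "expect mu (\<lambda>y. \<bar>?w y\<bar>) \<le> 2 * expect mu (\<lambda>y. \<bar>f y\<bar>)"
      using expect_abs_diff_le[of mu "cond_exp mu (- ?G) f" "cond_exp mu (- ?K) f"]
        expect_abs_cond_exp_le[of mu "- ?G" f] expect_abs_cond_exp_le[of mu "- ?K" f]
      by linarith
    then show ?thesis
      using delta0_nonneg pmin_pos by (intro divide_right_mono mult_left_mono) auto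
  qed
  finally show ?thesis
    using cond_exp_gJ_superset_minus_gJ[of "{l}" J mu grp f x] assms(1) by (simp add: ac_simps)
qed

lemma abs_cond_exp_interaction_le:
  assumes "j \<noteq> l" "l \<noteq> k" "j \<noteq> k" and x: "x \<in> set_pmf mu"
  shows "\<bar>cond_exp mu (grp -` {l, j})
      (\<lambda>y. gJ mu grp f {l, k} y - gJ mu grp f {l} y - gJ mu grp f {k} y) x\<bar>
    \<le> 8 * delta0 mu grp * expect mu (\<lambda>y. \<bar>f y\<bar>) / pmin mu grp"
proof -
  let ?H = "grp -` {l, j}" and ?Gl = "grp -` {l}" and ?Gk = "grp -` {k}"
  let ?glk = "gJ mu grp f {l, k}" and ?gl = "gJ mu grp f {l}" and ?gk = "gJ mu grp f {k}"
  let ?m = "marginalize mu ?Gk ?glk"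
  let ?B = "2 * delta0 mu grp * expect mu (\<lambda>y. \<bar>f y\<bar>) / pmin mu grp"
  have Gl_H: "?Gl \<subseteq> ?H" and H_Gk: "?H \<subseteq> - ?Gk" and Gl_Gk: "?Gl \<subseteq> - ?Gk"
    using assms(1-3) by auto
  have "\<bar>cond_exp mu ?H ?gk x - marginalize mu ?Gk ?gk x\<bar> \<le> ?B"
    using \<open>l \<noteq> k\<close> Gl_H H_Gk x by (intro abs_cond_exp_gJ_minus_marginalize_le) auto
  then have "\<bar>cond_exp mu ?H ?gk x\<bar> \<le> ?B"
    by (simp add: marginalize_eq_expect[OF depends_only_on_gJ] expect_gJ)
  moreover have "\<bar>cond_exp mu ?H ?glk x - ?m x\<bar> \<le> ?B"
    using \<open>l \<noteq> k\<close> Gl_H H_Gk x by (intro abs_cond_exp_gJ_minus_marginalize_le) auto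
  moreover have "\<bar>cond_exp mu ?Gl ?glk x - ?m x\<bar> \<le> ?B"
    using \<open>l \<noteq> k\<close> Gl_Gk x by (intro abs_cond_exp_gJ_minus_marginalize_le) auto
  moreover have "\<bar>cond_exp mu ?Gl ?glk x - ?gl x\<bar> \<le> ?B"
    using x by (intro abs_cond_exp_group_gJ_minus_gJ_le) auto
  moreover have "cond_exp mu ?H ?gl x = ?gl x"
    using x agree_refl
    by (intro cond_exp_depends_only_on depends_only_on_mono[OF depends_only_on_gJ]
        pr_nonzero_if_in_support) auto
  then have "cond_exp mu ?H (\<lambda>y. ?glk y - ?gl y - ?gk y) x
      = (cond_exp mu ?H ?glk x - ?m x) - (cond_exp mu ?Gl ?glk x - ?m x)
        + (cond_exp mu ?Gl ?glk x - ?gl x) - cond_exp mu ?H ?gk x"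
    by (simp add: cond_exp_diff)
  ultimately show ?thesis by linarith
qed

end

theorem lemma4:
  fixes mu :: "('n::finite \<Rightarrow> bool) pmf"
    and grp :: "'n \<Rightarrow> 'm::finite"
    and f :: "('n \<Rightarrow> bool) \<Rightarrow> real"
    and j l k :: 'm
  assumes groups_nonempty: "surj grp"
    and one_hot: "\<And>m. card (grp -` {m}) > 1 \<Longrightarrow>
                    (\<forall>x\<in>set_pmf mu. card {i. grp i = m \<and> x i} = 1)"
    and pmin_pos: "pmin mu grp > 0"
    and distinct: "j \<noteq> l" "l \<noteq> k" "j \<noteq> k"
  shows "AE x in measure_pmf mu.
           \<bar>cond_exp mu (grp -` {l, j})
               (\<lambda>y. gJ mu grp f {l, k} y - gJ mu grp f {l} y - gJ mu grp f {k} y) x\<bar>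
           \<le> 8 * delta0 mu grp * sqrt (measure_pmf.expectation mu (\<lambda>y. (f y)\<^sup>2)) / pmin mu grp"
proof -
  interpret feature_groups mu grp
    using assms by unfold_locales blast+
  have "8 * delta0 mu grp * expect mu (\<lambda>y. \<bar>f y\<bar>) / pmin mu grp
      \<le> 8 * delta0 mu grp * sqrt (expect mu (\<lambda>y. (f y)\<^sup>2)) / pmin mu grp"
    using expect_abs_le_sqrt[of mu f] delta0_nonneg pmin_pos
    by (intro divide_right_mono mult_left_mono) auto
  then show ?thesis
    unfolding AE_measure_pmf_iff expectation_eq_expect
    using abs_cond_exp_interaction_le[OF distinct] order_trans by blast
qed

end
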